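(* Let $(X,\|\cdot\|)$ be a Banach space. If every ordered pair $(A,B)$ of nonempty subsets of $X$ with $A$ convex has the $UC$ property, then $(X,\|\cdot\|)$ is a uniformly convex Banach space.
   Context: $\mathrm{dist}(A,B)=\inf\{\|a-b\|:a\in A,b\in B\}$. The ordered pair $(A,B)$ has the $UC$ property if for all sequences $\{x_n\},\{z_n\}\subset A$, $\{y_n\}\subset B$ with $\lim_n\|x_n-y_n\|=\lim_n\|z_n-y_n\|=\mathrm{dist}(A,B)$ one has $\lim_n\|x_n-z_n\|=0$. $X$ is uniformly convex if for every $\varepsilon\in(0,2]$, $\inf\{1-\|\frac{x+y}{2}\|: \|x\|,\|y\|\le1,\ \|x-y\|\ge\varepsilon\}>0$. *)

theory Defs
  imports "HOL-Analysis.Analysis"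
begin

definition UC_property :: "'a::real_normed_vector set \<Rightarrow> 'a set \<Rightarrow> bool" where
  "UC_property A B \<longleftrightarrow>
     (\<forall>x z y :: nat \<Rightarrow> 'a.
        (\<forall>n. x n \<in> A) \<longrightarrow> (\<forall>n. z n \<in> A) \<longrightarrow> (\<forall>n. y n \<in> B) \<longrightarrow>
        (\<lambda>n. norm (x n - y n)) \<longlonglongrightarrow> setdist A B \<longrightarrow>
        (\<lambda>n. norm (z n - y n)) \<longlonglongrightarrow> setdist A B \<longrightarrow>
        (\<lambda>n. norm (x n - z n)) \<longlonglongrightarrow> 0)"

text \<open>Uniform convexity: for each eps in (0,2] the infimum of 1 - norm ((x+y)/2) over
  x, y in the closed unit ball with norm (x - y) >= eps is positive (inf of empty set = +infinity),
  written out as the existence of a positive lower bound.\<close>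

definition uniformly_convex_space :: "'a::real_normed_vector itself \<Rightarrow> bool" where
  "uniformly_convex_space TYPE('a) \<longleftrightarrow>
     (\<forall>\<epsilon>::real. 0 < \<epsilon> \<and> \<epsilon> \<le> 2 \<longrightarrow>
        (\<exists>\<delta>>0. \<forall>x y :: 'a. norm x \<le> 1 \<longrightarrow> norm y \<le> 1 \<longrightarrow> norm (x - y) \<ge> \<epsilon> \<longrightarrow>
              1 - norm ((1/2) *\<^sub>R (x + y)) \<ge> \<delta>))"

end

theory Submission
  imports Defs
begin

text \<open>If the space is not uniformly convex, there are \<open>a\<^sub>n, b\<^sub>n\<close> in the unit ball with
  \<open>\<parallel>a\<^sub>n - b\<^sub>n\<parallel> \<ge> \<epsilon>\<close> and \<open>\<parallel>a\<^sub>n + b\<^sub>n\<parallel> \<rightarrow> 2\<close>. Push \<open>s\<^sub>n = a\<^sub>n + b\<^sub>n\<close> radially onto the sphere of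
  radius 2, obtaining \<open>t\<^sub>n\<close>. The unit ball \<open>A\<close> and \<open>B = {t\<^sub>n}\<close> are at distance 1, and
  \<open>\<parallel>a\<^sub>n - t\<^sub>n\<parallel> \<le> \<parallel>b\<^sub>n\<parallel> + \<parallel>s\<^sub>n - t\<^sub>n\<parallel> \<le> 1 + (2 - \<parallel>s\<^sub>n\<parallel>) \<rightarrow> 1\<close>, and symmetrically for \<open>b\<^sub>n\<close>.
  So the UC property of \<open>(A, B)\<close> would force \<open>\<parallel>a\<^sub>n - b\<^sub>n\<parallel> \<rightarrow> 0\<close>.\<close>

lemma setdist_cball_subset_sphere:
  fixes B :: "'a::real_normed_vector set"
  assumes "B \<noteq> {}" "B \<subseteq> sphere 0 R" "0 \<le> r" "r \<le> R"
  shows "setdist (cball 0 r) B = R - r"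
proof (rule antisym)
  obtain y where y: "y \<in> B" using assms(1) by blast
  then have norm_y: "norm y = R" using assms(2) by auto
  show "setdist (cball 0 r) B \<le> R - r"
  proof (cases "R = 0")
    case True
    then show ?thesis
      using setdist_le_dist[of 0 "cball 0 r" y B] y norm_y assms(3,4) by simp
  next
    case False
    then have "R > 0" using assms(3,4) by linarith
    have "r / R \<le> 1" using \<open>R > 0\<close> assms(4) by simp
    have "dist ((r / R) *\<^sub>R y) y = norm ((1 - r / R) *\<^sub>R y)"
      by (simp add: dist_norm norm_minus_commute algebra_simps)
    also have "\<dots> = (1 - r / R) * R" using \<open>r / R \<le> 1\<close> norm_y by simp
    also have "\<dots> = R - r" using \<open>R > 0\<close> by (simp add: field_simps)
    finally have "dist ((r / R) *\<^sub>R y) y = R - r" .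
    moreover have "(r / R) *\<^sub>R y \<in> cball 0 r"
      using \<open>R > 0\<close> assms(3) norm_y by simp
    ultimately show ?thesis using setdist_le_dist[of _ "cball 0 r" y B] y by metis
  qed
  show "R - r \<le> setdist (cball 0 r) B"
  proof (rule le_setdistI)
    fix x y :: 'a assume "x \<in> cball 0 r" "y \<in> B"
    then show "R - r \<le> dist x y"
      using assms(2) norm_triangle_ineq2[of y x] by (auto simp: dist_norm norm_minus_commute)
  qed (use assms in auto)
qed

lemma norm_diff_rescale_to_sphere:
  fixes s :: "'a::real_normed_vector"
  assumes "s \<noteq> 0"
  shows "norm (s - (R / norm s) *\<^sub>R s) = \<bar>norm s - R\<bar>"
proof -
  have "s - (R / norm s) *\<^sub>R s = (1 - R / norm s) *\<^sub>R s" by (simp add: algebra_simps)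
  then have "norm (s - (R / norm s) *\<^sub>R s) = \<bar>1 - R / norm s\<bar> * norm s" by simp
  also have "\<dots> = \<bar>norm s - R\<bar>"
    using assms by (simp add: abs_mult[symmetric] field_simps)
  finally show ?thesis .
qed

lemma not_uniformly_convex_spaceE:
  assumes "\<not> uniformly_convex_space TYPE('a::real_normed_vector)"
  obtains \<epsilon> :: real and a b :: "nat \<Rightarrow> 'a::real_normed_vector"
  where "0 < \<epsilon>" "\<And>n. norm (a n) \<le> 1" "\<And>n. norm (b n) \<le> 1" "\<And>n. \<epsilon> \<le> norm (a n - b n)"
    "\<And>n. 2 - inverse (real (Suc n)) < norm (a n + b n)"
proof -
  obtain \<epsilon> :: real where "0 < \<epsilon>" and bad:
    "\<And>\<delta>. \<delta> > 0 \<Longrightarrow> \<exists>x y :: 'a. norm x \<le> 1 \<and> norm y \<le> 1 \<and> \<epsilon> \<le> norm (x - y) \<and>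
       1 - norm ((1/2) *\<^sub>R (x + y)) < \<delta>"
    using assms unfolding uniformly_convex_space_def by (auto simp: not_le)
  have "\<exists>x y :: 'a. norm x \<le> 1 \<and> norm y \<le> 1 \<and> \<epsilon> \<le> norm (x - y) \<and>
      2 - inverse (real (Suc n)) < norm (x + y)" for n
  proof -
    obtain x y :: 'a where "norm x \<le> 1" "norm y \<le> 1" "\<epsilon> \<le> norm (x - y)"
      and "1 - norm ((1/2) *\<^sub>R (x + y)) < inverse (real (Suc n)) / 2"
      using bad[of "inverse (real (Suc n)) / 2"] by auto
    then show ?thesis by (intro exI[of _ x] exI[of _ y]) auto
  qed
  then obtain a b :: "nat \<Rightarrow> 'a" where "\<And>n. norm (a n) \<le> 1" "\<And>n. norm (b n) \<le> 1"
    "\<And>n. \<epsilon> \<le> norm (a n - b n)" "\<And>n. 2 - inverse (real (Suc n)) < norm (a n + b n)"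
    by metis
  with \<open>0 < \<epsilon>\<close> show ?thesis using that by blast
qed

lemma not_uniformly_convex_imp_not_UC_property_cball:
  assumes "\<not> uniformly_convex_space TYPE('a::real_normed_vector)"
  shows "\<exists>B. B \<noteq> {} \<and> \<not> UC_property (cball (0::'a) 1) B"
proof -
  obtain \<epsilon> :: real and a b :: "nat \<Rightarrow> 'a" where "0 < \<epsilon>"
    and a: "\<And>n. norm (a n) \<le> 1" and b: "\<And>n. norm (b n) \<le> 1"
    and apart: "\<And>n. \<epsilon> \<le> norm (a n - b n)"
    and sum_large: "\<And>n. 2 - inverse (real (Suc n)) < norm (a n + b n)"
    using not_uniformly_convex_spaceE[OF assms] by metis
  define s where "s n = a n + b n" for n
  define t where "t n = (2 / norm (s n)) *\<^sub>R s n" for n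
  have inverse_le_1: "inverse (real (Suc n)) \<le> 1" for n by (simp add: inverse_le_1_iff)
  have s_nonzero: "s n \<noteq> 0" for n
    using sum_large[of n] inverse_le_1[of n] by (auto simp: s_def)
  have t_sphere: "t n \<in> sphere 0 2" for n using s_nonzero[of n] by (simp add: t_def)
  have s_t_close: "norm (s n - t n) < inverse (real (Suc n))" for n
  proof -
    have "norm (s n) \<le> 2" using a[of n] b[of n] norm_triangle_ineq[of "a n" "b n"] by (simp add: s_def)
    then show ?thesis
      using norm_diff_rescale_to_sphere[OF s_nonzero[of n], of 2] sum_large[of n] by (simp add: t_def s_def)
  qed
  have to_t: "(\<lambda>n. norm (x n - t n)) \<longlonglongrightarrow> 1"
    if x: "\<And>n. norm (x n) \<le> 1" and sx: "\<And>n. norm (s n - x n) \<le> 1" for x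
  proof (rule real_tendsto_sandwich[OF _ _ tendsto_const])
    have "1 \<le> norm (x n - t n)" for n
      using x[of n] t_sphere[of n] norm_triangle_ineq2[of "t n" "x n"] by (simp add: norm_minus_commute)
    then show "\<forall>\<^sub>F n in sequentially. 1 \<le> norm (x n - t n)" by simp
    have "norm (x n - t n) \<le> 1 + inverse (real (Suc n))" for n
      using sx[of n] s_t_close[of n] norm_triangle_ineq[of "x n - s n" "s n - t n"]
      by (simp add: norm_minus_commute)
    then show "\<forall>\<^sub>F n in sequentially. norm (x n - t n) \<le> 1 + inverse (real (Suc n))" by simp
    show "(\<lambda>n. 1 + inverse (real (Suc n))) \<longlonglongrightarrow> 1"
      using tendsto_add[OF tendsto_const LIMSEQ_inverse_real_of_nat, of 1] by simp
  qed
  have "setdist (cball 0 1) (range t) = 1"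
    using setdist_cball_subset_sphere[of "range t" 2 1] t_sphere by (simp add: image_subset_iff)
  moreover have "(\<lambda>n. norm (a n - t n)) \<longlonglongrightarrow> 1" "(\<lambda>n. norm (b n - t n)) \<longlonglongrightarrow> 1"
    using to_t[OF a] to_t[OF b] b a by (simp_all add: s_def)
  ultimately have "(\<lambda>n. norm (a n - b n)) \<longlonglongrightarrow> 0" if "UC_property (cball 0 1) (range t)"
    using that[unfolded UC_property_def, rule_format, of a b t] a b by simp
  moreover have "\<not> (\<lambda>n. norm (a n - b n)) \<longlonglongrightarrow> 0"
  proof
    assume "(\<lambda>n. norm (a n - b n)) \<longlonglongrightarrow> 0"
    then have "\<epsilon> \<le> 0" using LIMSEQ_le_const apart by blast
    with \<open>0 < \<epsilon>\<close> show False by simp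
  qed
  ultimately show ?thesis by blast
qed

theorem corollary45:
  assumes "\<forall>A B :: 'a::banach set. A \<noteq> {} \<and> B \<noteq> {} \<and> convex A \<longrightarrow> UC_property A B"
  shows "uniformly_convex_space TYPE('a)"
proof (rule ccontr)
  assume "\<not> uniformly_convex_space TYPE('a)"
  then obtain B :: "'a set" where "B \<noteq> {}" "\<not> UC_property (cball 0 1) B"
    using not_uniformly_convex_imp_not_UC_property_cball by blast
  moreover have "cball (0::'a) 1 \<noteq> {}" by simp
  ultimately show False using assms convex_cball by blast
qed

end
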